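(* Let $p\in(\tfrac12,1)$, $n\ge1$, $B\in\{1,\dots,n\}$. For $\lambda\in[0,1]$ let $\sigma^\lambda$ be the symmetric strategy profile of the crowdfunding game $\Gamma(B,n)$ in which every player plays action $1$ with probability $1$ after signal $H$ and with probability $\lambda$ after signal $L$. For a fixed player $i$, let $x^\lambda=\Pr_{\sigma^\lambda}(\sum_{j\ne i}a_j\ge B-1\mid\omega=H)$ and $y^\lambda=\Pr_{\sigma^\lambda}(\sum_{j\ne i}a_j\ge B-1\mid\omega=L)$. If $(1-p)x^{\lambda'}-py^{\lambda'}=0$ for some $\lambda'\in(0,1)$, then $(1-p)x^{\lambda}-py^{\lambda}>0$ for all $\lambda\in[0,\lambda')$ and $(1-p)x^{\lambda}-py^{\lambda}<0$ for all $\lambda\in(\lambda',1]$.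
   Context: The crowdfunding game $\Gamma(B,n)$ with parameter $p\in(\tfrac12,1)$: there are $n$ players and a threshold $B\in\{1,\dots,n\}$. A state $\omega\in\{H,L\}$ is drawn with probability $\tfrac12$ each. Conditional on $\omega$, each player $i$ independently receives a signal $s_i\in\{H,L\}$ with $\Pr(s_i=\omega\mid\omega)=p$. Players simultaneously choose $a_i\in\{0,1\}$. Under a profile where each player independently plays $1$ with the stated signal-dependent probabilities, conditional on $\omega$ the other players' actions are i.i.d.; in particular under $\sigma^\lambda$, conditional on $\omega=H$ each other player plays $1$ with probability $p+(1-p)\lambda$, and conditional on $\omega=L$ with probability $(1-p)+p\lambda$. *)

theory Defs
  imports Complex_Main
begin

definition binom_tail :: "nat \<Rightarrow> nat \<Rightarrow> real \<Rightarrow> real" where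
  "binom_tail m k q = (\<Sum>j\<in>{k..m}. real (m choose j) * q ^ j * (1 - q) ^ (m - j))"

text \<open>Under sigma^lambda, conditional on omega = H each of the n-1 other players
  plays 1 independently with probability p + (1-p) lambda; conditional on omega = L
  with probability (1-p) + p lambda. x^lambda, y^lambda are the probabilities that
  at least B-1 of the others play 1.\<close>
definition x_lam :: "real \<Rightarrow> nat \<Rightarrow> nat \<Rightarrow> real \<Rightarrow> real" where
  "x_lam p n B lam = binom_tail (n - 1) (B - 1) (p + (1 - p) * lam)"

definition y_lam :: "real \<Rightarrow> nat \<Rightarrow> nat \<Rightarrow> real \<Rightarrow> real" where
  "y_lam p n B lam = binom_tail (n - 1) (B - 1) ((1 - p) + p * lam)"

end

theory Submission
  imports Defs
begin

text \<open>
  Let G be the Binomial(m, q) tail at k, with m = n - 1 and k = B - 1, and let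
  X = p + (1 - p) lam and Y = 1 - p + p lam, so that x_lam = G X and y_lam = G Y.
  The sign of (1 - p) x_lam - p y_lam is that of (1 - p) R - p with R = G X / G Y, so it
  suffices that R is strictly decreasing on [0, 1); at lam = 1 the difference is 1 - 2p < 0.
  Since 1 - X = (1 - p)(1 - lam) and 1 - Y = p (1 - lam), the derivative of R has the sign
  of h X - h Y for h q = (1 - q) G'(q) / G(q), and Y < X.  As G' is a multiple of the Beta
  density q^(k-1) (1 - q)^(m-k), 1 / h is a positive combination of powers (q / (1 - q))^(j-k+1),
  j = k..m, of the odds, so h is strictly decreasing.  Finally B = 1 is impossible, since then
  x_lam = y_lam = 1.
\<close>

definition binom_tail_deriv :: "nat \<Rightarrow> nat \<Rightarrow> real \<Rightarrow> real" where
  "binom_tail_deriv m k q = real m * real (m - 1 choose (k - 1)) * q ^ (k - 1) * (1 - q) ^ (m - k)"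

lemma binom_term_has_real_derivative:
  assumes "1 \<le> j" "j \<le> m"
  shows "((\<lambda>q. real (m choose j) * q ^ j * (1 - q) ^ (m - j)) has_real_derivative
           binom_tail_deriv m j q - binom_tail_deriv m (Suc j) q) (at q)"
proof -
  have absorb: "real (m choose j) * real j = real m * real (m - 1 choose (j - 1))"
    using times_binomial_minus1_eq[of j m] assms
    by (metis of_nat_mult mult.commute less_eq_Suc_le One_nat_def)
  have absorb_comp: "real (m choose j) * real (m - j) = real m * real (m - 1 choose j)"
    using binomial_absorb_comp[of m j] by (metis of_nat_mult mult.commute)
  have "((\<lambda>q. real (m choose j) * q ^ j * (1 - q) ^ (m - j)) has_real_derivative
          real (m choose j) * real j * q ^ (j - 1) * (1 - q) ^ (m - j)
        - real (m choose j) * real (m - j) * q ^ j * (1 - q) ^ (m - Suc j)) (at q)"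
    by (rule derivative_eq_intros DERIV_pow DERIV_ident refl)+ (simp add: algebra_simps)
  then show ?thesis
    unfolding absorb absorb_comp binom_tail_deriv_def by (simp add: algebra_simps)
qed

lemma binom_tail_has_real_derivative:
  assumes "1 \<le> k" "k \<le> m"
  shows "(binom_tail m k has_real_derivative binom_tail_deriv m k q) (at q)"
proof -
  have "(binom_tail m k has_real_derivative
          (\<Sum>j=k..m. binom_tail_deriv m j q - binom_tail_deriv m (Suc j) q)) (at q)"
    unfolding binom_tail_def[abs_def]
    by (rule DERIV_sum) (use assms binom_term_has_real_derivative in auto)
  also have "(\<Sum>j=k..m. binom_tail_deriv m j q - binom_tail_deriv m (Suc j) q)
           = binom_tail_deriv m k q - binom_tail_deriv m (Suc m) q"
    using sum_Suc_diff[of k m "\<lambda>j. - binom_tail_deriv m j q"] assms by simp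
  also have "binom_tail_deriv m (Suc m) q = 0"
    using assms by (simp add: binom_tail_deriv_def)
  finally show ?thesis by simp
qed

lemma binom_tail_0: "binom_tail m 0 q = 1"
proof -
  have "binom_tail m 0 q = (\<Sum>j\<le>m. real (m choose j) * q ^ j * (1 - q) ^ (m - j))"
    unfolding binom_tail_def by (simp add: atMost_atLeast0)
  also have "\<dots> = (q + (1 - q)) ^ m" by (rule binomial_ring[symmetric])
  finally show ?thesis by simp
qed

lemma binom_tail_at_1:
  assumes "k \<le> m"
  shows "binom_tail m k 1 = 1"
proof -
  have "binom_tail m k 1 = (\<Sum>j=k..m. if j = m then 1 else 0)"
    unfolding binom_tail_def by (intro sum.cong) auto
  then show ?thesis using assms by simp
qed

lemma binom_tail_pos: "k \<le> m \<Longrightarrow> 0 < q \<Longrightarrow> q \<le> 1 \<Longrightarrow> 0 < binom_tail m k q"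
  unfolding binom_tail_def by (rule sum_pos2[of _ m]) auto

text \<open>The summands for j = Suc i + d, m = j + e on the two sides of the next lemma; their
  ratio is ((1 - x) y / ((1 - y) x))^(d + 1).\<close>

lemma binom_term_cross_less:
  fixes x y :: real
  assumes "0 < y" "y < x" "x < 1"
  shows "(1 - x) * x ^ i * (1 - x) ^ (d + e) * (y ^ (Suc i + d) * (1 - y) ^ e)
       < (1 - y) * y ^ i * (1 - y) ^ (d + e) * (x ^ (Suc i + d) * (1 - x) ^ e)"
proof -
  define c where "c = x ^ i * y ^ i * (1 - x) ^ e * (1 - y) ^ e"
  have "0 < c" unfolding c_def using assms by simp
  moreover have "((1 - x) * y) ^ Suc d < ((1 - y) * x) ^ Suc d"
    using assms by (intro power_strict_mono) (auto simp: algebra_simps)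
  ultimately have "c * ((1 - x) * y) ^ Suc d < c * ((1 - y) * x) ^ Suc d"
    by simp
  then show ?thesis
    unfolding c_def by (simp add: power_add power_mult_distrib mult_ac)
qed

lemma binom_tail_log_deriv_strict_antimono:
  fixes x y :: real
  assumes "1 \<le> k" "k \<le> m" "0 < y" "y < x" "x < 1"
  shows "(1 - x) * binom_tail_deriv m k x * binom_tail m k y
       < (1 - y) * binom_tail_deriv m k y * binom_tail m k x"
proof -
  obtain i where i: "k = Suc i" using assms(1) by (cases k) auto
  define c where "c = real m * real (m - 1 choose i)"
  have "0 < c" unfolding c_def using assms i by simp
  have "(\<Sum>j=k..m. c * real (m choose j) *
           ((1 - x) * x ^ i * (1 - x) ^ (m - k) * (y ^ j * (1 - y) ^ (m - j))))
      < (\<Sum>j=k..m. c * real (m choose j) *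
           ((1 - y) * y ^ i * (1 - y) ^ (m - k) * (x ^ j * (1 - x) ^ (m - j))))"
  proof (rule sum_strict_mono)
    fix j assume j: "j \<in> {k..m}"
    then obtain d e where "j = k + d" "m = j + e" by (metis atLeastAtMost_iff le_iff_add)
    then have "(1 - x) * x ^ i * (1 - x) ^ (m - k) * (y ^ j * (1 - y) ^ (m - j))
             < (1 - y) * y ^ i * (1 - y) ^ (m - k) * (x ^ j * (1 - x) ^ (m - j))"
      using binom_term_cross_less[OF assms(3-5), of i d e] i by simp
    then show "c * real (m choose j) * ((1 - x) * x ^ i * (1 - x) ^ (m - k) * (y ^ j * (1 - y) ^ (m - j)))
             < c * real (m choose j) * ((1 - y) * y ^ i * (1 - y) ^ (m - k) * (x ^ j * (1 - x) ^ (m - j)))"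
      using \<open>0 < c\<close> j by simp
  qed (use assms in auto)
  then show ?thesis
    unfolding binom_tail_deriv_def binom_tail_def sum_distrib_left i c_def
    by (simp add: algebra_simps)
qed

lemma affine_signal_probs_ordered:
  fixes p l :: real
  assumes "1/2 < p" "p < 1" "0 \<le> l" "l < 1"
  shows "0 < 1 - p + p * l" and "1 - p + p * l < p + (1 - p) * l" and "p + (1 - p) * l < 1"
proof -
  have "0 < (1 - p) * (1 - l)" "0 < (2 * p - 1) * (1 - l)" using assms by simp_all
  then show "1 - p + p * l < p + (1 - p) * l" and "p + (1 - p) * l < 1"
    by (simp_all add: algebra_simps)
  show "0 < 1 - p + p * l" using assms by (simp add: add_pos_nonneg)
qed

lemma binom_tail_ratio_strict_decreasing:
  fixes p a b :: real
  assumes "1/2 < p" "p < 1" "1 \<le> k" "k \<le> m" "0 \<le> a" "a < b" "b < 1"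
  shows "binom_tail m k (p + (1 - p) * b) / binom_tail m k (1 - p + p * b)
       < binom_tail m k (p + (1 - p) * a) / binom_tail m k (1 - p + p * a)"
proof (rule DERIV_neg_imp_decreasing[OF \<open>a < b\<close>])
  fix l assume l: "a \<le> l" "l \<le> b"
  define X Y where "X = p + (1 - p) * l" and "Y = 1 - p + p * l"
  let ?G = "binom_tail m k" and ?G' = "binom_tail_deriv m k"
  have X_compl: "1 - X = (1 - p) * (1 - l)" and Y_compl: "1 - Y = p * (1 - l)"
    unfolding X_def Y_def by (simp_all add: algebra_simps)
  have "0 < Y" "Y < X" "X < 1"
    unfolding X_def Y_def using assms l by (intro affine_signal_probs_ordered; simp)+
  have "0 < ?G Y"
    using \<open>0 < Y\<close> \<open>Y < X\<close> \<open>X < 1\<close> assms by (intro binom_tail_pos) auto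
  have "(1 - l) * ((1 - p) * ?G' X * ?G Y) < (1 - l) * (p * ?G' Y * ?G X)"
    using binom_tail_log_deriv_strict_antimono[OF assms(3,4) \<open>0 < Y\<close> \<open>Y < X\<close> \<open>X < 1\<close>]
    unfolding X_compl Y_compl by (simp add: mult_ac)
  then have numerator_neg: "(1 - p) * ?G' X * ?G Y - p * ?G' Y * ?G X < 0"
    using assms l by simp
  have dX: "((\<lambda>l. ?G (p + (1 - p) * l)) has_real_derivative ?G' X * (1 - p)) (at l)"
    unfolding X_def
    by (rule DERIV_chain2[OF binom_tail_has_real_derivative[OF assms(3,4)]])
       (auto intro!: derivative_eq_intros)
  have dY: "((\<lambda>l. ?G (1 - p + p * l)) has_real_derivative ?G' Y * p) (at l)"
    unfolding Y_def
    by (rule DERIV_chain2[OF binom_tail_has_real_derivative[OF assms(3,4)]])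
       (auto intro!: derivative_eq_intros)
  have "((\<lambda>l. ?G (p + (1 - p) * l) / ?G (1 - p + p * l)) has_real_derivative
      (?G' X * (1 - p) * ?G Y - ?G X * (?G' Y * p)) / (?G Y * ?G Y)) (at l)"
    using DERIV_divide[OF dX dY] \<open>0 < ?G Y\<close> unfolding X_def Y_def by simp
  moreover have "(?G' X * (1 - p) * ?G Y - ?G X * (?G' Y * p)) / (?G Y * ?G Y) < 0"
    using numerator_neg \<open>0 < ?G Y\<close> by (intro divide_neg_pos) (auto simp: mult_ac)
  ultimately show "\<exists>D. ((\<lambda>l. ?G (p + (1 - p) * l) / ?G (1 - p + p * l)) has_real_derivative D) (at l)
                     \<and> D < 0"
    by blast
qed

lemma y_lam_pos:
  assumes "0 < p" "p < 1" "B \<le> n" "0 \<le> l" "l \<le> 1"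
  shows "0 < y_lam p n B l"
proof -
  have "p * l \<le> p" using assms by (simp add: mult_left_le)
  moreover have "0 < 1 - p + p * l" using assms by (simp add: add_pos_nonneg)
  ultimately show ?thesis
    unfolding y_lam_def using assms by (intro binom_tail_pos) auto
qed

lemma x_lam_y_lam_cross_less:
  assumes "1/2 < p" "p < 1" "2 \<le> B" "B \<le> n" "0 \<le> a" "a < b" "b < 1"
  shows "x_lam p n B b * y_lam p n B a < x_lam p n B a * y_lam p n B b"
proof -
  have "x_lam p n B b / y_lam p n B b < x_lam p n B a / y_lam p n B a"
    unfolding x_lam_def y_lam_def
    using assms by (intro binom_tail_ratio_strict_decreasing) auto
  moreover have "0 < y_lam p n B a" "0 < y_lam p n B b"
    using assms by (intro y_lam_pos; simp)+
  ultimately show ?thesis by (simp add: divide_less_eq field_simps)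
qed

lemma indifference_cross_sign:
  fixes p x y x' y' :: real
  assumes "p < 1" "0 < y'" "(1 - p) * x' - p * y' = 0"
  shows "x' * y < x * y' \<Longrightarrow> 0 < (1 - p) * x - p * y"
    and "x * y' < x' * y \<Longrightarrow> (1 - p) * x - p * y < 0"
proof -
  have "y' * ((1 - p) * x - p * y) = (1 - p) * (x * y' - x' * y) + y * ((1 - p) * x' - p * y')"
    by (simp add: algebra_simps)
  then have scaled: "y' * ((1 - p) * x - p * y) = (1 - p) * (x * y' - x' * y)"
    using assms(3) by simp
  show "0 < (1 - p) * x - p * y" if "x' * y < x * y'"
  proof -
    have "0 < y' * ((1 - p) * x - p * y)" unfolding scaled using that assms by simp
    then show ?thesis using assms(2) by (simp add: zero_less_mult_iff)
  qed
  show "(1 - p) * x - p * y < 0" if "x * y' < x' * y"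
  proof -
    have "y' * ((1 - p) * x - p * y) < 0" unfolding scaled using that assms by (simp add: mult_pos_neg)
    then show ?thesis using assms(2) by (simp add: mult_less_0_iff)
  qed
qed

theorem proposition1:
  fixes p :: real and n B :: nat and lam' :: real
  assumes "1/2 < p" "p < 1" "n \<ge> 1" "1 \<le> B" "B \<le> n"
    and "0 < lam'" "lam' < 1"
    and "(1 - p) * x_lam p n B lam' - p * y_lam p n B lam' = 0"
  shows "(\<forall>lam\<in>{0..<lam'}. (1 - p) * x_lam p n B lam - p * y_lam p n B lam > 0)
       \<and> (\<forall>lam\<in>{lam'<..1}. (1 - p) * x_lam p n B lam - p * y_lam p n B lam < 0)"
proof -
  have "B \<noteq> 1"
  proof
    assume "B = 1"
    then have "(1 - p) * x_lam p n B lam' - p * y_lam p n B lam' = 1 - 2 * p"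
      by (simp add: x_lam_def y_lam_def binom_tail_0)
    with assms show False by simp
  qed
  then have B: "2 \<le> B" "B \<le> n" using assms by auto
  have "0 < y_lam p n B lam'" using assms by (intro y_lam_pos) auto
  note indifference = indifference_cross_sign[OF \<open>p < 1\<close> this assms(8)]
  show ?thesis
  proof (intro conjI ballI)
    fix l assume "l \<in> {0..<lam'}"
    then show "(1 - p) * x_lam p n B l - p * y_lam p n B l > 0"
      using assms B by (intro indifference(1) x_lam_y_lam_cross_less) auto
  next
    fix l assume l: "l \<in> {lam'<..1}"
    show "(1 - p) * x_lam p n B l - p * y_lam p n B l < 0"
    proof (cases "l = 1")
      case True
      then show ?thesis using assms by (simp add: x_lam_def y_lam_def binom_tail_at_1)
    next
      case False
      then show ?thesis
        using assms B l by (intro indifference(2) x_lam_y_lam_cross_less) auto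
    qed
  qed
qed

end
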